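(* In the online tolling setting described in the context, let the tolls be generated by $\boldsymbol{\tau}^{(1)}=\bm{0}$ and $\boldsymbol{\tau}^{(t+1)}=(\boldsymbol{\tau}^{(t)}-\gamma(\bm{c}-\bm{x}^t))_+$ (componentwise positive part), where $\bm{x}^t$ are the equilibrium edge flows under $\boldsymbol{\tau}^{(t)}$, with a step size $0<\gamma\le1$. Then for every edge $e\in E$ and every period $t$, $$\tau^{(t)}_e\le\max_{u\in\mathcal{U}}\lambda_u+\max_{e'\in E}c_{e'}+|\mathcal{U}|.$$
   Context: Network: directed graph $G=(V,E)$, edge capacities $c_e\ge0$, fixed edge travel times $l_e\ge0$. Finite user set $\mathcal{U}$; user $u$ has fixed outside-option cost $\lambda_u\ge0$. In each period $t$, O-D pairs $w^t_u$ and values of time $v^t_u\ge0$ are drawn i.i.d. across periods from a distribution $\mathcal{D}$; $\mathcal{P}^t_u$ is the finite set of paths for $w^t_u$. Given tolls $\boldsymbol{\tau}^{(t)}$, the period-$t$ equilibrium assigns each user to a path $P\in\mathcal{P}^t_u$ or the outside option so as to minimize cost ($v^t_u\sum_{e\in P}l_e+\sum_{e\in P}\tau^{(t)}_e$ for a path, $\lambda_u$ for the outside option; capacities need not be respected), with edge flows $x^t_e$ equal to the number of users whose chosen path contains $e$. *)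

theory Defs
  imports Main Complex_Main
begin

definition is_path :: "'e set \<Rightarrow> ('e \<Rightarrow> 'v) \<Rightarrow> ('e \<Rightarrow> 'v) \<Rightarrow> 'v \<Rightarrow> 'v \<Rightarrow> 'e list \<Rightarrow> bool" where
  "is_path E src dst orig dest p \<longleftrightarrow>
     p \<noteq> [] \<and> set p \<subseteq> E \<and> distinct p \<and>
     src (p ! 0) = orig \<and> dst (last p) = dest \<and>
     (\<forall>i. Suc i < length p \<longrightarrow> dst (p ! i) = src (p ! Suc i))"

(* Cost of an option for a user: a path (Some p) or the outside option (None). *)
definition option_cost :: "('e \<Rightarrow> real) \<Rightarrow> ('e \<Rightarrow> real) \<Rightarrow> real \<Rightarrow> real \<Rightarrow> 'e list option \<Rightarrow> real" where
  "option_cost l tau v lam ch =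
     (case ch of None \<Rightarrow> lam
       | Some p \<Rightarrow> v * (\<Sum>e\<in>set p. l e) + (\<Sum>e\<in>set p. tau e))"

definition edge_flow :: "'u set \<Rightarrow> ('u \<Rightarrow> 'e list option) \<Rightarrow> 'e \<Rightarrow> nat" where
  "edge_flow U ch e = card {u\<in>U. \<exists>p. ch u = Some p \<and> e \<in> set p}"

(* Equilibrium under tolls tau: each user picks a cost-minimizing option among
   its available paths Ps u and the outside option (capacities ignored). *)
definition is_equilibrium ::
  "'u set \<Rightarrow> ('u \<Rightarrow> 'e list set) \<Rightarrow> ('e \<Rightarrow> real) \<Rightarrow> ('u \<Rightarrow> real) \<Rightarrow> ('u \<Rightarrow> real)
    \<Rightarrow> ('e \<Rightarrow> real) \<Rightarrow> ('u \<Rightarrow> 'e list option) \<Rightarrow> bool" where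
  "is_equilibrium U Ps l v lam tau ch \<longleftrightarrow>
     (\<forall>u\<in>U. (ch u = None \<or> (\<exists>p\<in>Ps u. ch u = Some p)) \<and>
        option_cost l tau (v u) (lam u) (ch u) \<le> lam u \<and>
        (\<forall>p\<in>Ps u. option_cost l tau (v u) (lam u) (ch u) \<le> option_cost l tau (v u) (lam u) (Some p)))"

end

theory Submission
  imports Defs
begin

text \<open>Once the toll of an edge exceeds every outside-option cost
  \<open>\<lambda>\<^sub>u\<close>, any path through it costs more than staying home, so no user takes it, the edge
  flow vanishes and the update can only lower the toll. Below that threshold a single update
  raises the toll by at most \<open>\<gamma> x\<^sub>e \<le> |\<U>|\<close>. Hence the toll never exceeds
  \<open>max \<lambda> + |\<U>|\<close>, and \<open>max c \<ge> 0\<close> is slack.\<close>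

lemma is_path_edges_subset: "is_path E src dst orig dest p \<Longrightarrow> set p \<subseteq> E"
  unfolding is_path_def by blast

lemma edge_flow_le_card: "finite U \<Longrightarrow> edge_flow U ch e \<le> card U"
  unfolding edge_flow_def by (simp add: card_mono)

lemma equilibrium_toll_le_outside_cost:
  assumes eq: "is_equilibrium U Ps l v lam tau ch"
    and u: "u \<in> U" and chosen: "ch u = Some p" and e: "e \<in> set p"
    and paths_in_E: "\<And>q. q \<in> Ps u \<Longrightarrow> set q \<subseteq> E"
    and l_nn: "\<And>e. e \<in> E \<Longrightarrow> 0 \<le> l e" and tau_nn: "\<And>e. e \<in> E \<Longrightarrow> 0 \<le> tau e"
    and v_nn: "0 \<le> v u"
  shows "tau e \<le> lam u"
proof -
  have p: "p \<in> Ps u" and cost_le: "option_cost l tau (v u) (lam u) (Some p) \<le> lam u"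
    using eq u chosen unfolding is_equilibrium_def by force+
  have pE: "set p \<subseteq> E" using paths_in_E[OF p] .
  have "0 \<le> v u * (\<Sum>e\<in>set p. l e)"
    using v_nn l_nn pE by (auto intro!: mult_nonneg_nonneg sum_nonneg)
  moreover have "tau e \<le> (\<Sum>e\<in>set p. tau e)"
    using e pE tau_nn by (auto intro!: member_le_sum)
  ultimately show ?thesis using cost_le unfolding option_cost_def by simp
qed

lemma equilibrium_edge_flow_eq_0:
  assumes eq: "is_equilibrium U Ps l v lam tau ch"
    and above: "\<And>u. u \<in> U \<Longrightarrow> lam u < tau e"
    and paths_in_E: "\<And>u q. u \<in> U \<Longrightarrow> q \<in> Ps u \<Longrightarrow> set q \<subseteq> E"
    and l_nn: "\<And>e. e \<in> E \<Longrightarrow> 0 \<le> l e" and tau_nn: "\<And>e. e \<in> E \<Longrightarrow> 0 \<le> tau e"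
    and v_nn: "\<And>u. u \<in> U \<Longrightarrow> 0 \<le> v u"
  shows "edge_flow U ch e = 0"
proof -
  have "{u\<in>U. \<exists>p. ch u = Some p \<and> e \<in> set p} = {}"
    using equilibrium_toll_le_outside_cost[OF eq _ _ _ paths_in_E l_nn tau_nn v_nn] above
    by (force simp: not_less[symmetric])
  then show ?thesis unfolding edge_flow_def by (simp only: card.empty)
qed

lemma projected_toll_step_le:
  fixes tau gamma c x L B :: real
  assumes "0 \<le> gamma" "gamma \<le> 1" "0 \<le> c" "0 \<le> x"
    and tau_le: "tau \<le> B" and "0 \<le> B" and below: "L + x \<le> B"
    and "L < tau \<Longrightarrow> x = 0"
  shows "max 0 (tau - gamma * (c - x)) \<le> B"
proof (rule max.boundedI)
  have gc: "0 \<le> gamma * c" and gx: "gamma * x \<le> x"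
    using assms by (simp_all add: mult_left_le_one_le)
  have "tau \<le> L \<or> x = 0" using assms by linarith
  then show "tau - gamma * (c - x) \<le> B"
  proof
    assume "tau \<le> L"
    then show ?thesis using gc gx below unfolding right_diff_distrib by linarith
  next
    assume "x = 0"
    then show ?thesis using gc tau_le by simp
  qed
qed (rule assms)

theorem lemma4:
  fixes E :: "'e set" and U :: "'u set"
    and src dst :: "'e \<Rightarrow> 'v"
    and c l :: "'e \<Rightarrow> real" and lam :: "'u \<Rightarrow> real"
    and w :: "nat \<Rightarrow> 'u \<Rightarrow> 'v \<times> 'v" and v :: "nat \<Rightarrow> 'u \<Rightarrow> real"
    and Ps :: "nat \<Rightarrow> 'u \<Rightarrow> 'e list set"
    and ch :: "nat \<Rightarrow> 'u \<Rightarrow> 'e list option"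
    and tau :: "nat \<Rightarrow> 'e \<Rightarrow> real" and gamma :: real
  assumes finE: "finite E" and nonemptyE: "E \<noteq> {}"
    and finU: "finite U" and nonemptyU: "U \<noteq> {}"
    and cap: "\<And>e. e \<in> E \<Longrightarrow> c e \<ge> 0"
    and len: "\<And>e. e \<in> E \<Longrightarrow> l e \<ge> 0"
    and lam_nn: "\<And>u. u \<in> U \<Longrightarrow> lam u \<ge> 0"
    and vot: "\<And>t u. t \<ge> 1 \<Longrightarrow> u \<in> U \<Longrightarrow> v t u \<ge> 0"
    and paths_fin: "\<And>t u. t \<ge> 1 \<Longrightarrow> u \<in> U \<Longrightarrow> finite (Ps t u)"
    and paths_ok: "\<And>t u p. t \<ge> 1 \<Longrightarrow> u \<in> U \<Longrightarrow> p \<in> Ps t u \<Longrightarrow>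
                      is_path E src dst (fst (w t u)) (snd (w t u)) p"
    and equil: "\<And>t. t \<ge> 1 \<Longrightarrow> is_equilibrium U (Ps t) l (v t) lam (tau t) (ch t)"
    and tau1: "\<And>e. tau 1 e = 0"
    and tau_step: "\<And>t e. t \<ge> 1 \<Longrightarrow>
                      tau (t + 1) e = max 0 (tau t e - gamma * (c e - real (edge_flow U (ch t) e)))"
    and gamma_pos: "0 < gamma" and gamma_le: "gamma \<le> 1"
  shows "\<forall>t\<ge>1. \<forall>e\<in>E. tau t e \<le> Max (lam ` U) + Max (c ` E) + real (card U)"
proof (intro allI impI)
  fix t :: nat assume "t \<ge> 1"
  let ?L = "Max (lam ` U)" and ?B = "Max (lam ` U) + Max (c ` E) + real (card U)"
  have L_nn: "0 \<le> ?L" and C_nn: "0 \<le> Max (c ` E)"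
    using finU nonemptyU lam_nn finE nonemptyE cap by (auto simp: Max_ge_iff)
  have tau_nn: "0 \<le> tau s e" if "s \<ge> 1" for s e
    using that tau1 tau_step[of "s - 1"] by (cases "s = 1") auto
  from \<open>t \<ge> 1\<close> show "\<forall>e\<in>E. tau t e \<le> ?B"
  proof (induction t rule: dec_induct)
    case base then show ?case using tau1 L_nn C_nn by simp
  next
    case (step s)
    have flow_0: "edge_flow U (ch s) e = 0" if "?L < tau s e" for e
    proof (rule equilibrium_edge_flow_eq_0[where E = E, OF equil[OF step.hyps(1)]])
      show "lam u < tau s e" if "u \<in> U" for u
        using that \<open>?L < tau s e\<close> finU by (meson Max_ge finite_imageI image_eqI le_less_trans)
    qed (use is_path_edges_subset[OF paths_ok[OF step.hyps(1)]] len tau_nn step.hyps(1) vot in auto)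
    have flow_le: "?L + real (edge_flow U (ch s) e) \<le> ?B" for e
      using edge_flow_le_card[OF finU, of "ch s" e] C_nn by simp
    show ?case
      unfolding tau_step[OF step.hyps(1), simplified]
      by (intro ballI projected_toll_step_le[where L = ?L])
        (use flow_0 flow_le step.IH gamma_pos gamma_le cap L_nn C_nn in auto)
  qed
qed

end
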